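(* Let $(M,\varepsilon)$ be a local Lie group. Regarding the torsion $T$ as a section of $\Lambda^2(T^*M)\otimes TM$, one has $\widehat dT=0$.
   Context: $M$ is a smooth manifold of dimension $n\ge2$. A splitting $\varepsilon$ assigns to each $(p,q)\in M\times M$ a linear isomorphism $\varepsilon(p,q):T_pM\to T_qM$, smooth in $(p,q)$, with $\varepsilon(q,r)\circ\varepsilon(p,q)=\varepsilon(p,r)$, $\varepsilon(p,p)=\mathrm{id}$. In coordinates $\varepsilon(p,q)=(\varepsilon^i_j(x,y))$; set $\Gamma^i_{kj}(x)=[\partial\varepsilon^i_j(x,y)/\partial y^k]_{y=x}$ (summation convention). The torsion is $T^i_{jk}=\Gamma^i_{jk}-\Gamma^i_{kj}$. $(M,\varepsilon)$ is a local Lie group if the system $\partial f^i(x)/\partial x^j=\varepsilon^i_j(x,f(x))$ is completely integrable (for all $p,q$ there is a local diffeomorphism $f$ near $p$ with $f(p)=q$ and $df_x=\varepsilon(x,f(x))$); equivalently $\widehat{\mathfrak{R}}=0$, with $\widehat{\mathfrak{R}}^i_{rj,k}=\partial_r\Gamma^i_{kj}+\Gamma^a_{kr}\Gamma^i_{aj}-\partial_j\Gamma^i_{kr}-\Gamma^a_{kj}\Gamma^i_{ar}$. For a $TM$-valued $2$-form $\phi=(\phi^i_{kj})$, $(\widehat d\phi)^i_{rkj}=\widehat d_r\phi^i_{kj}-\widehat d_k\phi^i_{rj}-\widehat d_j\phi^i_{kr}$, where $\widehat d_r\phi^i_{kj}=\partial_r\phi^i_{kj}-\Gamma^i_{ar}\phi^a_{kj}$.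 *)

theory Defs
  imports "HOL-Analysis.Analysis"
begin

text \<open>Everything is done in a single coordinate chart: an open set U of R^n.
  Points are vectors of type real^'n; the splitting is a matrix-valued function
  eps (x,y) whose entry (i,j) is eps^i_j(x,y).\<close>

text \<open>C-infinity real-valued functions on an open set (coinductively: differentiable,
  and every directional derivative is again smooth).\<close>
coinductive smooth_on :: "'a::euclidean_space set \<Rightarrow> ('a \<Rightarrow> real) \<Rightarrow> bool" where
  "f differentiable_on U \<Longrightarrow> (\<forall>v. smooth_on U (\<lambda>x. frechet_derivative f (at x) v))
     \<Longrightarrow> smooth_on U f"

definition pd :: "(real^'n \<Rightarrow> real) \<Rightarrow> 'n \<Rightarrow> real^'n \<Rightarrow> real" where
  "pd f r x = frechet_derivative f (at x) (axis r 1)"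

definition splitting :: "(real^'n) set \<Rightarrow> ((real^'n) \<times> (real^'n) \<Rightarrow> real^'n^'n) \<Rightarrow> bool" where
  "splitting U eps \<longleftrightarrow>
     (\<forall>i j. smooth_on (U \<times> U) (\<lambda>z. eps z $ i $ j)) \<and>
     (\<forall>p\<in>U. \<forall>q\<in>U. invertible (eps (p,q))) \<and>
     (\<forall>p\<in>U. \<forall>q\<in>U. \<forall>r\<in>U. eps (q,r) ** eps (p,q) = eps (p,r)) \<and>
     (\<forall>p\<in>U. eps (p,p) = mat 1)"

text \<open>Local Lie group: the system df^i/dx^j = eps^i_j(x,f(x)) is completely integrable,
  i.e. for all p, q there is a local solution f near p with f(p) = q.\<close>
definition local_lie_group :: "(real^'n) set \<Rightarrow> ((real^'n) \<times> (real^'n) \<Rightarrow> real^'n^'n) \<Rightarrow> bool" where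
  "local_lie_group U eps \<longleftrightarrow> splitting U eps \<and>
     (\<forall>p\<in>U. \<forall>q\<in>U. \<exists>V f. open V \<and> p \<in> V \<and> V \<subseteq> U \<and> f ` V \<subseteq> U \<and> f p = q \<and>
        (\<forall>x\<in>V. (f has_derivative (\<lambda>v. eps (x, f x) *v v)) (at x)))"

text \<open>Christoffel-type symbols: Chr eps x i k j = Gamma^i_{kj}(x) = d eps^i_j(x,y)/d y^k at y = x.\<close>
definition Chr :: "((real^'n) \<times> (real^'n) \<Rightarrow> real^'n^'n) \<Rightarrow> real^'n \<Rightarrow> 'n \<Rightarrow> 'n \<Rightarrow> 'n \<Rightarrow> real" where
  "Chr eps x i k j = pd (\<lambda>y. eps (x,y) $ i $ j) k x"

definition torsion :: "((real^'n) \<times> (real^'n) \<Rightarrow> real^'n^'n) \<Rightarrow> real^'n \<Rightarrow> 'n \<Rightarrow> 'n \<Rightarrow> 'n \<Rightarrow> real" where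
  "torsion eps x i j k = Chr eps x i j k - Chr eps x i k j"

text \<open>For a TM-valued 2-form phi (phi x i k j = phi^i_{kj}(x)):
  hat_d_r phi^i_{kj} = d_r phi^i_{kj} - Gamma^i_{ar} phi^a_{kj}.\<close>
definition hat_d_comp :: "((real^'n) \<times> (real^'n) \<Rightarrow> real^'n^'n) \<Rightarrow> (real^'n \<Rightarrow> 'n \<Rightarrow> 'n \<Rightarrow> 'n \<Rightarrow> real)
    \<Rightarrow> real^'n \<Rightarrow> 'n \<Rightarrow> 'n \<Rightarrow> 'n \<Rightarrow> 'n \<Rightarrow> real" where
  "hat_d_comp eps phi x r i k j =
     pd (\<lambda>y. phi y i k j) r x - (\<Sum>a\<in>UNIV. Chr eps x i a r * phi x a k j)"

definition hat_d :: "((real^'n) \<times> (real^'n) \<Rightarrow> real^'n^'n) \<Rightarrow> (real^'n \<Rightarrow> 'n \<Rightarrow> 'n \<Rightarrow> 'n \<Rightarrow> real)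
    \<Rightarrow> real^'n \<Rightarrow> 'n \<Rightarrow> 'n \<Rightarrow> 'n \<Rightarrow> 'n \<Rightarrow> real" where
  "hat_d eps phi x i r k j =
     hat_d_comp eps phi x r i k j - hat_d_comp eps phi x k i r j - hat_d_comp eps phi x j i k r"

end

theory Submission
  imports Defs
begin

text \<open>Everything reduces to the symmetry of second derivatives. Applied to
  \<open>y \<mapsto> \<epsilon>(x,y)\<close>, whose derivative is \<open>\<Gamma>(y) \<epsilon>(x,y)\<close> by the cocycle identity, it
  shows that \<open>\<Gamma>\<close> is flat. Applied to a local solution \<open>f\<close> of \<open>df\<^sub>x = \<epsilon>(x, f x)\<close> with
  \<open>f p = q\<close>, it shows that \<open>\<epsilon>(p,q)\<close> transports the torsion at \<open>p\<close> to the torsion at \<open>q\<close>.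
  Differentiating this transport identity at \<open>q = p\<close> expresses \<open>\<partial>T\<close> through \<open>\<Gamma>\<close> and \<open>T\<close>;
  together with flatness, the three terms of \<open>hat_d eps (torsion eps)\<close> cancel.\<close>

definition second_difference :: "('a::real_vector \<Rightarrow> real) \<Rightarrow> 'a \<Rightarrow> 'a \<Rightarrow> 'a \<Rightarrow> real \<Rightarrow> real" where
  "second_difference f x u v t = f (x + t *\<^sub>R u + t *\<^sub>R v) - f (x + t *\<^sub>R u) - f (x + t *\<^sub>R v) + f x"

lemma second_difference_commute: "second_difference f x u v t = second_difference f x v u t"
  by (simp add: second_difference_def add_ac)

lemma second_difference_mean_value:
  fixes f :: "'a::real_normed_vector \<Rightarrow> real"
  assumes t: "0 < t"
    and f': "\<And>s a. 0 \<le> s \<Longrightarrow> s \<le> t \<Longrightarrow> 0 \<le> a \<Longrightarrow> a \<le> t \<Longrightarrow>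
      (f has_derivative f' (x + s *\<^sub>R u + a *\<^sub>R v)) (at (x + s *\<^sub>R u + a *\<^sub>R v))"
  obtains \<sigma> where "0 < \<sigma>" "\<sigma> < t"
    "second_difference f x u v t = t * (f' (x + \<sigma> *\<^sub>R u + t *\<^sub>R v) u - f' (x + \<sigma> *\<^sub>R u) u)"
proof -
  have along: "((\<lambda>s. f (x + s *\<^sub>R u + a *\<^sub>R v)) has_derivative
      (\<lambda>d. d * f' (x + s *\<^sub>R u + a *\<^sub>R v) u)) (at s)"
    if "0 \<le> s" "s \<le> t" "0 \<le> a" "a \<le> t" for s a
  proof -
    have "((\<lambda>s. x + s *\<^sub>R u + a *\<^sub>R v) has_derivative (\<lambda>d. d *\<^sub>R u)) (at s)"
      by (auto intro!: derivative_eq_intros)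
    from has_derivative_compose[OF this f'[OF that]] show ?thesis
      using linear_scale[OF has_derivative_linear[OF f'[OF that]]] by simp
  qed
  define \<phi> where "\<phi> s = f (x + s *\<^sub>R u + t *\<^sub>R v) - f (x + s *\<^sub>R u + 0 *\<^sub>R v)" for s
  define \<phi>' where "\<phi>' s d = d * (f' (x + s *\<^sub>R u + t *\<^sub>R v) u - f' (x + s *\<^sub>R u + 0 *\<^sub>R v) u)" for s d
  have d\<phi>: "(\<phi> has_derivative \<phi>' s) (at s)" if "0 \<le> s" "s \<le> t" for s
    unfolding \<phi>_def \<phi>'_def right_diff_distrib using that t
    by (intro has_derivative_diff along) auto
  have "continuous_on {0..t} \<phi>"
    using d\<phi> by (intro has_derivative_continuous_on) (auto intro: has_derivative_at_withinI)
  then obtain \<sigma> where "0 < \<sigma>" "\<sigma> < t" "\<phi> t - \<phi> 0 = \<phi>' \<sigma> (t - 0)"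
    using mvt[OF t] d\<phi> by (metis less_eq_real_def)
  then show thesis
    by (intro that[of \<sigma>]) (simp_all add: \<phi>_def \<phi>'_def second_difference_def)
qed

lemma has_derivative_increment_bound:
  fixes G :: "'a::real_normed_vector \<Rightarrow> real"
  assumes G: "(G has_derivative H) (at x)" and e: "e > 0"
  obtains d where "d > 0"
    "\<And>a b. norm a < d \<Longrightarrow> norm b < d \<Longrightarrow> \<bar>G (x + a) - G (x + b) - H (a - b)\<bar> \<le> e * (norm a + norm b)"
proof -
  obtain d where d: "d > 0"
    "\<And>y. norm (y - x) < d \<Longrightarrow> \<bar>G y - G x - H (y - x)\<bar> \<le> e * norm (y - x)"
    using G e unfolding has_derivative_at_alt real_norm_def by blast
  have near: "\<bar>G (x + a) - G x - H a\<bar> \<le> e * norm a" if "norm a < d" for a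
    using d(2)[of "x + a"] that by simp
  show thesis
  proof (rule that[OF d(1)])
    fix a b :: 'a assume "norm a < d" "norm b < d"
    with near[of a] near[of b] show "\<bar>G (x + a) - G (x + b) - H (a - b)\<bar> \<le> e * (norm a + norm b)"
      using linear_diff[OF has_derivative_linear[OF G], of a b] by (simp add: distrib_left)
  qed
qed

lemma second_difference_estimate:
  fixes f :: "'a::real_normed_vector \<Rightarrow> real"
  assumes "open V" "x \<in> V"
    and f': "\<And>y. y \<in> V \<Longrightarrow> (f has_derivative f' y) (at y)"
    and H: "((\<lambda>y. f' y u) has_derivative H) (at x)"
    and e: "e > 0"
  shows "\<exists>T>0. \<forall>t. 0 < t \<and> t < T \<longrightarrow> \<bar>second_difference f x u v t - t\<^sup>2 * H v\<bar> \<le> e * t\<^sup>2"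
proof -
  define c where "c = 2 * norm u + norm v + 1"
  have c: "c > 0" by (simp add: c_def add_nonneg_pos)
  obtain d0 where d0: "d0 > 0" "ball x d0 \<subseteq> V"
    using assms(1,2) open_contains_ball by blast
  obtain d1 where d1: "d1 > 0" "\<And>a b. norm a < d1 \<Longrightarrow> norm b < d1 \<Longrightarrow>
      \<bar>f' (x + a) u - f' (x + b) u - H (a - b)\<bar> \<le> e / c * (norm a + norm b)"
    using has_derivative_increment_bound[OF H] e c by (metis divide_pos_pos)
  define T where "T = min d0 d1 / c"
  show ?thesis
  proof (intro exI[of _ T] conjI allI impI)
    show "T > 0" using d0 d1 c by (simp add: T_def)
    fix t :: real assume t: "0 < t \<and> t < T"
    have small: "norm (s *\<^sub>R u + a *\<^sub>R v) \<le> s * norm u + a * norm v"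
      if "0 \<le> s" "0 \<le> a" for s a
      using norm_triangle_ineq[of "s *\<^sub>R u" "a *\<^sub>R v"] that by simp
    have near: "norm (s *\<^sub>R u + a *\<^sub>R v) < min d0 d1"
      if "0 \<le> s" "s \<le> t" "0 \<le> a" "a \<le> t" for s a
    proof -
      have "s * norm u + a * norm v \<le> t * norm u + t * norm v"
        using that by (intro add_mono mult_right_mono) auto
      also have "\<dots> \<le> t * c"
        using t mult_nonneg_nonneg[of t "norm u"] by (simp add: c_def distrib_left)
      also have "\<dots> < min d0 d1" using t c by (simp add: T_def pos_less_divide_eq mult.commute)
      finally show ?thesis using small[OF that(1,3)] by linarith
    qed
    have inV: "x + s *\<^sub>R u + a *\<^sub>R v \<in> V" if "0 \<le> s" "s \<le> t" "0 \<le> a" "a \<le> t" for s a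
    proof -
      have "dist x (x + s *\<^sub>R u + a *\<^sub>R v) < d0"
        using near[OF that] by (subst dist_commute) (simp add: dist_norm add.assoc)
      then show ?thesis using d0(2) by (simp add: subset_iff)
    qed
    obtain \<sigma> where \<sigma>: "0 < \<sigma>" "\<sigma> < t" and mv:
      "second_difference f x u v t = t * (f' (x + \<sigma> *\<^sub>R u + t *\<^sub>R v) u - f' (x + \<sigma> *\<^sub>R u) u)"
      using t second_difference_mean_value[OF _ f'[OF inV]] by blast
    have "\<bar>f' (x + (\<sigma> *\<^sub>R u + t *\<^sub>R v)) u - f' (x + (\<sigma> *\<^sub>R u + 0 *\<^sub>R v)) u - H (t *\<^sub>R v)\<bar>
        \<le> e / c * (norm (\<sigma> *\<^sub>R u + t *\<^sub>R v) + norm (\<sigma> *\<^sub>R u + 0 *\<^sub>R v))"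
      using d1(2)[of "\<sigma> *\<^sub>R u + t *\<^sub>R v" "\<sigma> *\<^sub>R u + 0 *\<^sub>R v"] near[of \<sigma> t] near[of \<sigma> 0] \<sigma> t
      by simp
    also have "\<dots> \<le> e / c * (t * c)"
    proof (rule mult_left_mono)
      have "\<sigma> * norm u \<le> t * norm u" using \<sigma> by (simp add: mult_right_mono)
      then show "norm (\<sigma> *\<^sub>R u + t *\<^sub>R v) + norm (\<sigma> *\<^sub>R u + 0 *\<^sub>R v) \<le> t * c"
        using small[of \<sigma> t] small[of \<sigma> 0] \<sigma> t by (simp add: c_def algebra_simps)
      show "0 \<le> e / c" using e c by simp
    qed
    finally have G: "\<bar>f' (x + \<sigma> *\<^sub>R u + t *\<^sub>R v) u - f' (x + \<sigma> *\<^sub>R u) u - t * H v\<bar> \<le> e * t"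
      using c by (simp add: add.assoc linear_scale[OF has_derivative_linear[OF H]])
    have "second_difference f x u v t - t\<^sup>2 * H v
        = t * (f' (x + \<sigma> *\<^sub>R u + t *\<^sub>R v) u - f' (x + \<sigma> *\<^sub>R u) u - t * H v)"
      by (simp add: mv power2_eq_square algebra_simps)
    also have "\<bar>\<dots>\<bar> \<le> t * (e * t)"
      using G t by (simp add: abs_mult mult_left_mono)
    finally show "\<bar>second_difference f x u v t - t\<^sup>2 * H v\<bar> \<le> e * t\<^sup>2"
      by (simp add: power2_eq_square mult_ac)
  qed
qed

lemma second_derivative_symmetric:
  fixes f :: "'a::real_normed_vector \<Rightarrow> real"
  assumes V: "open V" "x \<in> V"
    and f': "\<And>y. y \<in> V \<Longrightarrow> (f has_derivative f' y) (at y)"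
    and Hu: "((\<lambda>y. f' y u) has_derivative Hu) (at x)"
    and Hv: "((\<lambda>y. f' y v) has_derivative Hv) (at x)"
  shows "Hu v = Hv u"
proof (rule ccontr)
  assume ne: "Hu v \<noteq> Hv u"
  define e where "e = \<bar>Hu v - Hv u\<bar> / 4"
  have e: "e > 0" using ne by (simp add: e_def)
  obtain T1 where T1: "T1 > 0" "\<forall>t. 0 < t \<and> t < T1 \<longrightarrow>
      \<bar>second_difference f x u v t - t\<^sup>2 * Hu v\<bar> \<le> e * t\<^sup>2"
    using second_difference_estimate[OF V f' Hu e] by blast
  obtain T2 where T2: "T2 > 0" "\<forall>t. 0 < t \<and> t < T2 \<longrightarrow>
      \<bar>second_difference f x v u t - t\<^sup>2 * Hv u\<bar> \<le> e * t\<^sup>2"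
    using second_difference_estimate[OF V f' Hv e] by blast
  define t where "t = min T1 T2 / 2"
  have t: "0 < t" "t < T1" "t < T2" using T1 T2 by (auto simp: t_def)
  define D where "D = second_difference f x u v t"
  have Du: "\<bar>D - t\<^sup>2 * Hu v\<bar> \<le> e * t\<^sup>2" using T1(2) t unfolding D_def by blast
  have Dv: "\<bar>D - t\<^sup>2 * Hv u\<bar> \<le> e * t\<^sup>2"
    using T2(2) t unfolding D_def second_difference_commute[of f x u v] by blast
  have "t\<^sup>2 * \<bar>Hu v - Hv u\<bar> = \<bar>(D - t\<^sup>2 * Hv u) - (D - t\<^sup>2 * Hu v)\<bar>"
    by (simp add: abs_mult flip: right_diff_distrib)
  also have "\<dots> \<le> 2 * e * t\<^sup>2"
    using Du Dv by linarith
  finally have "t\<^sup>2 * \<bar>Hu v - Hv u\<bar> \<le> 2 * e * t\<^sup>2" .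
  then have "t\<^sup>2 * \<bar>Hu v - Hv u\<bar> \<le> t\<^sup>2 * (\<bar>Hu v - Hv u\<bar> / 2)"
    by (simp add: e_def algebra_simps)
  then show False using ne t(1) by simp
qed

lemma sum_axis_mult [simp]: "(\<Sum>m\<in>UNIV. axis k (1::real) $ m * c m) = c k"
  by (simp add: axis_def if_distrib[of "\<lambda>x. x * _"] cong: if_cong)

lemma sum_mult_mat_1 [simp]: "(\<Sum>m\<in>UNIV. c m * (mat 1 :: real^'n^'n) $ m $ j) = c j"
  by (simp add: mat_def if_distrib[of "\<lambda>x. _ * x"] cong: if_cong)

lemma matrix_vector_mult_axis [simp]: "((A::real^'n^'m) *v axis r 1) $ b = A $ b $ r"
  by (simp add: matrix_vector_mult_def axis_def if_distrib[of "\<lambda>x. _ * x"] cong: if_cong)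

lemma linear_coordinate_expansion:
  fixes L :: "real^'n \<Rightarrow> real"
  assumes "linear L"
  shows "L v = (\<Sum>r\<in>UNIV. v $ r * L (axis r 1))"
proof -
  have "L v = L (\<Sum>r\<in>UNIV. v $ r *\<^sub>R axis r 1)"
    using basis_expansion[of v] by (simp add: scalar_mult_eq_scaleR)
  also have "\<dots> = (\<Sum>r\<in>UNIV. v $ r * L (axis r 1))"
    using assms by (simp add: linear_sum linear_scale)
  finally show ?thesis .
qed

lemma has_derivative_partials:
  fixes f :: "real^'n \<Rightarrow> real"
  assumes "(f has_derivative F) (at x)"
  shows "F = (\<lambda>w. \<Sum>r\<in>UNIV. w $ r * pd f r x)"
proof
  fix w
  have "F w = (\<Sum>r\<in>UNIV. w $ r * F (axis r 1))"
    by (rule linear_coordinate_expansion[OF has_derivative_linear[OF assms]])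
  also have "\<dots> = (\<Sum>r\<in>UNIV. w $ r * pd f r x)"
    using frechet_derivative_at[OF assms] by (simp add: pd_def)
  finally show "F w = (\<Sum>r\<in>UNIV. w $ r * pd f r x)" .
qed

lemma differentiable_has_derivative_partials:
  fixes f :: "real^'n \<Rightarrow> real"
  assumes "f differentiable (at x)"
  shows "(f has_derivative (\<lambda>w. \<Sum>r\<in>UNIV. w $ r * pd f r x)) (at x)"
proof -
  have D: "(f has_derivative frechet_derivative f (at x)) (at x)"
    using assms by (simp add: frechet_derivative_works)
  then have "frechet_derivative f (at x) = (\<lambda>w. \<Sum>r\<in>UNIV. w $ r * pd f r x)"
    by (rule has_derivative_partials)
  with D show ?thesis by simp
qed

lemma has_derivative_unique_on_open:
  assumes "open U" "x \<in> U" "\<forall>y\<in>U. f y = g y"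
    and "(f has_derivative F) (at x)" "(g has_derivative G) (at x)"
  shows "F = G"
  using has_derivative_transform_within_open[OF assms(4,1,2) assms(3)[rule_format]] assms(5)
  by (rule has_derivative_unique)

lemma smooth_on_differentiable_at:
  assumes "smooth_on S f" "open S" "z \<in> S"
  shows "f differentiable (at z)"
proof -
  have "f differentiable_on S" using assms(1) by (cases rule: smooth_on.cases) auto
  then have "f differentiable at z within S" using assms(3) by (simp add: differentiable_on_def)
  then show ?thesis using at_within_open[OF assms(3,2)] by simp
qed

lemma smooth_on_frechet_derivative:
  "smooth_on S f \<Longrightarrow> smooth_on S (\<lambda>x. frechet_derivative f (at x) v)"
  by (cases rule: smooth_on.cases) auto

lemma sum_if_const_cond: "(\<Sum>x\<in>A. if P then f x else 0) = (if P then sum f A else 0)"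
  by simp

locale splitting_chart =
  fixes U :: "(real^'n) set" and eps :: "(real^'n) \<times> (real^'n) \<Rightarrow> real^'n^'n"
  assumes open_U: "open U" and splitting: "splitting U eps"
begin

lemma eps_cocycle: "p \<in> U \<Longrightarrow> q \<in> U \<Longrightarrow> r \<in> U \<Longrightarrow> eps (q,r) ** eps (p,q) = eps (p,r)"
  using splitting unfolding splitting_def by blast

lemma eps_diag: "p \<in> U \<Longrightarrow> eps (p,p) = mat 1"
  using splitting unfolding splitting_def by blast

lemma eps_smooth: "smooth_on (U \<times> U) (\<lambda>z. eps z $ i $ j)"
  using splitting unfolding splitting_def by blast

definition eps_deriv :: "'n \<Rightarrow> 'n \<Rightarrow> (real^'n) \<times> (real^'n) \<Rightarrow> (real^'n) \<times> (real^'n) \<Rightarrow> real" where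
  "eps_deriv i j z = frechet_derivative (\<lambda>z. eps z $ i $ j) (at z)"

lemma has_derivative_eps:
  "z \<in> U \<times> U \<Longrightarrow> ((\<lambda>z. eps z $ i $ j) has_derivative eps_deriv i j z) (at z)"
  unfolding eps_deriv_def frechet_derivative_works[symmetric]
  using smooth_on_differentiable_at[OF eps_smooth] open_U by (simp add: open_Times)

lemma eps_deriv_split: "z \<in> U \<times> U \<Longrightarrow> eps_deriv i j z (a,b) = eps_deriv i j z (a,0) + eps_deriv i j z (0,b)"
  using linear_add[OF has_derivative_linear[OF has_derivative_eps], of z i j "(a,0)" "(0,b)"] by simp

lemma has_derivative_eps_first:
  assumes "p \<in> U" "q \<in> U"
  shows "((\<lambda>x. eps (x,q) $ i $ j) has_derivative (\<lambda>a. eps_deriv i j (p,q) (a,0))) (at p)"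
  using has_derivative_compose[OF has_derivative_Pair[OF has_derivative_ident has_derivative_const]
      has_derivative_eps] assms by simp

lemma has_derivative_eps_second:
  assumes "p \<in> U" "q \<in> U"
  shows "((\<lambda>y. eps (p,y) $ i $ j) has_derivative (\<lambda>b. eps_deriv i j (p,q) (0,b))) (at q)"
  using has_derivative_compose[OF has_derivative_Pair[OF has_derivative_const has_derivative_ident]
      has_derivative_eps] assms by simp

lemma eps_deriv_second_diag:
  assumes "x \<in> U"
  shows "eps_deriv i j (x,x) (0,b) = (\<Sum>m\<in>UNIV. b $ m * Chr eps x i m j)"
  using has_derivative_partials[OF has_derivative_eps_second[OF assms assms]]
  unfolding Chr_def by metis

lemma eps_cocycle_entry:
  assumes "p \<in> U" "q \<in> U" "r \<in> U"
  shows "eps (p,r) $ i $ j = (\<Sum>a\<in>UNIV. eps (q,r) $ i $ a * eps (p,q) $ a $ j)"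
proof -
  have "eps (p,r) $ i $ j = (eps (q,r) ** eps (p,q)) $ i $ j" using eps_cocycle[OF assms] by simp
  then show ?thesis by (simp add: matrix_matrix_mult_def)
qed

text \<open>In matrix notation, with \<open>\<Gamma>\<^sub>m = (Chr eps _ _ m _)\<close>: the cocycle identity gives
  \<open>\<partial>\<^sub>m \<epsilon>(p,\<cdot>)(q) = \<Gamma>\<^sub>m(q) \<epsilon>(p,q)\<close> and \<open>\<partial>\<^sub>m \<epsilon>(\<cdot>,q)(p) = - \<epsilon>(p,q) \<Gamma>\<^sub>m(p)\<close>.\<close>

lemma eps_deriv_second:
  assumes p: "p \<in> U" and q: "q \<in> U"
  shows "eps_deriv i j (p,q) (0,b) = (\<Sum>a\<in>UNIV. (\<Sum>m\<in>UNIV. b $ m * Chr eps q i m a) * eps (p,q) $ a $ j)"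
proof -
  have eq: "\<forall>y\<in>U. eps (p,y) $ i $ j = (\<Sum>a\<in>UNIV. eps (q,y) $ i $ a * eps (p,q) $ a $ j)"
    using eps_cocycle_entry[OF p q] by blast
  have "((\<lambda>y. \<Sum>a\<in>UNIV. eps (q,y) $ i $ a * eps (p,q) $ a $ j) has_derivative
      (\<lambda>b. \<Sum>a\<in>UNIV. eps_deriv i a (q,q) (0,b) * eps (p,q) $ a $ j)) (at q)"
    using q by (intro has_derivative_sum has_derivative_mult_left has_derivative_eps_second)
  with has_derivative_unique_on_open[OF open_U q eq has_derivative_eps_second[OF p q]]
  have "(\<lambda>b. eps_deriv i j (p,q) (0,b)) = (\<lambda>b. \<Sum>a\<in>UNIV. eps_deriv i a (q,q) (0,b) * eps (p,q) $ a $ j)" .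
  from fun_cong[OF this, of b] show ?thesis by (simp add: eps_deriv_second_diag[OF q])
qed

lemma eps_deriv_first:
  assumes p: "p \<in> U" and q: "q \<in> U"
  shows "eps_deriv i j (p,q) (a,0) = - (\<Sum>c\<in>UNIV. eps (p,q) $ i $ c * (\<Sum>m\<in>UNIV. a $ m * Chr eps p c m j))"
proof -
  have eq: "\<forall>y\<in>U. eps (p,q) $ i $ j = (\<Sum>c\<in>UNIV. eps (y,q) $ i $ c * eps (p,y) $ c $ j)"
    using eps_cocycle_entry[OF p _ q] by blast
  have "((\<lambda>y. \<Sum>c\<in>UNIV. eps (y,q) $ i $ c * eps (p,y) $ c $ j) has_derivative
      (\<lambda>a. \<Sum>c\<in>UNIV. eps (p,q) $ i $ c * eps_deriv c j (p,p) (0,a) + eps_deriv i c (p,q) (a,0) * eps (p,p) $ c $ j)) (at p)"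
    using p q by (intro has_derivative_sum has_derivative_mult has_derivative_eps_first has_derivative_eps_second)
  with has_derivative_unique_on_open[OF open_U p eq has_derivative_const]
  have "(\<lambda>a. 0) = (\<lambda>a. \<Sum>c\<in>UNIV. eps (p,q) $ i $ c * eps_deriv c j (p,p) (0,a) + eps_deriv i c (p,q) (a,0) * eps (p,p) $ c $ j)" .
  then have "0 = (\<Sum>c\<in>UNIV. eps (p,q) $ i $ c * eps_deriv c j (p,p) (0,a) + eps_deriv i c (p,q) (a,0) * eps (p,p) $ c $ j)"
    by (rule fun_cong)
  also have "\<dots> = (\<Sum>c\<in>UNIV. eps (p,q) $ i $ c * (\<Sum>m\<in>UNIV. a $ m * Chr eps p c m j)) + eps_deriv i j (p,q) (a,0)"
    by (simp add: sum.distrib eps_diag[OF p] eps_deriv_second_diag[OF p])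
  finally show ?thesis by linarith
qed

lemma eps_deriv_graph_axis:
  assumes p: "p \<in> U" and q: "q \<in> U"
  shows "eps_deriv i j (p,q) (axis r 1, eps (p,q) *v axis r 1)
      = (\<Sum>a\<in>UNIV. (\<Sum>b\<in>UNIV. eps (p,q) $ b $ r * Chr eps q i b a) * eps (p,q) $ a $ j)
        - (\<Sum>m\<in>UNIV. eps (p,q) $ i $ m * Chr eps p m r j)"
proof -
  have "eps_deriv i j (p,q) (axis r 1, eps (p,q) *v axis r 1)
      = eps_deriv i j (p,q) (axis r 1, 0) + eps_deriv i j (p,q) (0, eps (p,q) *v axis r 1)"
    by (rule eps_deriv_split) (use p q in simp)
  then show ?thesis using p q by (simp add: eps_deriv_first eps_deriv_second)
qed

lemma Chr_eq_eps_deriv: "x \<in> U \<Longrightarrow> Chr eps x i k j = eps_deriv i j (x,x) (0, axis k 1)"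
  by (simp add: eps_deriv_second_diag)

lemma Chr_differentiable:
  assumes x: "x \<in> U"
  shows "(\<lambda>y. Chr eps y i k j) differentiable (at x)"
proof -
  have "smooth_on (U \<times> U) (\<lambda>z. eps_deriv i j z (0, axis k 1))"
    unfolding eps_deriv_def by (rule smooth_on_frechet_derivative[OF eps_smooth])
  then have "(\<lambda>z. eps_deriv i j z (0, axis k 1)) differentiable (at (x,x))"
    by (rule smooth_on_differentiable_at) (use x open_U in \<open>auto simp: open_Times\<close>)
  then obtain D where "((\<lambda>z. eps_deriv i j z (0, axis k 1)) has_derivative D) (at (x,x))"
    unfolding differentiable_def by blast
  from has_derivative_compose[OF has_derivative_Pair[OF has_derivative_ident has_derivative_ident] this]
  have "((\<lambda>y. eps_deriv i j (y,y) (0, axis k 1)) has_derivative (\<lambda>h. D (h,h))) (at x)" .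
  then have "((\<lambda>y. Chr eps y i k j) has_derivative (\<lambda>h. D (h,h))) (at x)"
    by (rule has_derivative_transform_within_open[OF _ open_U x]) (simp add: Chr_eq_eps_deriv)
  then show ?thesis by (rule differentiableI)
qed

lemma has_derivative_Chr:
  "x \<in> U \<Longrightarrow> ((\<lambda>y. Chr eps y i k j) has_derivative (\<lambda>w. \<Sum>r\<in>UNIV. w $ r * pd (\<lambda>y. Chr eps y i k j) r x)) (at x)"
  by (intro differentiable_has_derivative_partials Chr_differentiable)

lemma has_derivative_torsion:
  "x \<in> U \<Longrightarrow> ((\<lambda>y. torsion eps y i k j) has_derivative (\<lambda>w. \<Sum>r\<in>UNIV. w $ r * pd (\<lambda>y. torsion eps y i k j) r x)) (at x)"
  unfolding torsion_def by (intro differentiable_has_derivative_partials differentiable_diff Chr_differentiable)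

lemma pd_torsion_eq:
  assumes x: "x \<in> U"
  shows "pd (\<lambda>y. torsion eps y i k j) r x = pd (\<lambda>y. Chr eps y i k j) r x - pd (\<lambda>y. Chr eps y i j k) r x"
proof -
  have "((\<lambda>y. torsion eps y i k j) has_derivative (\<lambda>w. (\<Sum>r\<in>UNIV. w $ r * pd (\<lambda>y. Chr eps y i k j) r x)
      - (\<Sum>r\<in>UNIV. w $ r * pd (\<lambda>y. Chr eps y i j k) r x))) (at x)"
    unfolding torsion_def using x by (intro has_derivative_diff has_derivative_Chr)
  from fun_cong[OF has_derivative_partials[OF this], of "axis r 1"] show ?thesis by simp
qed

text \<open>The vanishing of the curvature \<open>\<widehat>\<R>\<close>, in the index order of \<open>Chr\<close>. It needs only the
  cocycle identity, not integrability.\<close>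

lemma Chr_flat:
  assumes x: "x \<in> U"
  shows "pd (\<lambda>y. Chr eps y i k j) r x + (\<Sum>a\<in>UNIV. Chr eps x i k a * Chr eps x a r j)
       = pd (\<lambda>y. Chr eps y i r j) k x + (\<Sum>a\<in>UNIV. Chr eps x i r a * Chr eps x a k j)"
proof -
  define f' where "f' y b = (\<Sum>a\<in>UNIV. (\<Sum>m\<in>UNIV. b $ m * Chr eps y i m a) * eps (x,y) $ a $ j)" for y b
  define H where "H k w = (\<Sum>a\<in>UNIV. Chr eps x i k a * eps_deriv a j (x,x) (0,w)
      + (\<Sum>r\<in>UNIV. w $ r * pd (\<lambda>y. Chr eps y i k a) r x) * eps (x,x) $ a $ j)" for k w
  have f': "((\<lambda>y. eps (x,y) $ i $ j) has_derivative f' y) (at y)" if "y \<in> U" for y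
    using has_derivative_eps_second[OF x that] unfolding eps_deriv_second[OF x that] f'_def .
  have H: "((\<lambda>y. f' y (axis k 1)) has_derivative H k) (at x)" for k
    unfolding f'_def H_def using x
    by (simp, intro has_derivative_sum has_derivative_mult has_derivative_Chr has_derivative_eps_second)
  have "H k (axis r 1) = H r (axis k 1)"
    by (rule second_derivative_symmetric[OF open_U x f' H H])
  then show ?thesis
    by (simp add: H_def eps_diag[OF x] eps_deriv_second_diag[OF x] sum.distrib add.commute)
qed

end

locale local_lie_chart = splitting_chart +
  assumes local_lie_group: "local_lie_group U eps"
begin

lemma torsion_transport:
  assumes p: "p \<in> U" and q: "q \<in> U"
  shows "(\<Sum>b\<in>UNIV. \<Sum>a\<in>UNIV. eps (p,q) $ b $ r * eps (p,q) $ a $ j * torsion eps q i b a)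
       = (\<Sum>m\<in>UNIV. eps (p,q) $ i $ m * torsion eps p m r j)"
proof -
  obtain V f where V: "open V" "p \<in> V" "V \<subseteq> U" "f ` V \<subseteq> U" "f p = q"
    and df: "\<forall>x\<in>V. (f has_derivative (\<lambda>v. eps (x, f x) *v v)) (at x)"
    using local_lie_group p q unfolding local_lie_group_def by blast
  define F where "F = eps (p,q)"
  define f' where "f' y v = (\<Sum>m\<in>UNIV. v $ m * eps (y, f y) $ i $ m)" for y v
  have f': "((\<lambda>y. f y $ i) has_derivative f' y) (at y)" if "y \<in> V" for y
  proof -
    have "((\<lambda>y. f y $ i) has_derivative (\<lambda>v. (eps (y, f y) *v v) $ i)) (at y)"
      using bounded_linear.has_derivative[OF bounded_linear_vec_nth df[rule_format, OF that]] .
    then show ?thesis by (simp add: f'_def[abs_def] matrix_vector_mult_def mult.commute)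
  qed
  have H: "((\<lambda>y. f' y (axis j 1)) has_derivative (\<lambda>w. eps_deriv i j (p,q) (w, F *v w))) (at p)" for j
  proof -
    have "((\<lambda>y. (y, f y)) has_derivative (\<lambda>w. (w, F *v w))) (at p)"
      using df V unfolding F_def by (intro has_derivative_Pair has_derivative_ident) auto
    from has_derivative_compose[OF this has_derivative_eps]
    show ?thesis using p q V(5) by (simp add: f'_def)
  qed
  have "eps_deriv i j (p,q) (axis r 1, F *v axis r 1) = eps_deriv i r (p,q) (axis j 1, F *v axis j 1)"
    by (rule second_derivative_symmetric[OF V(1,2) f' H H])
  then have sym: "(\<Sum>a\<in>UNIV. (\<Sum>b\<in>UNIV. F $ b $ r * Chr eps q i b a) * F $ a $ j)
      - (\<Sum>a\<in>UNIV. (\<Sum>b\<in>UNIV. F $ b $ j * Chr eps q i b a) * F $ a $ r)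
      = (\<Sum>m\<in>UNIV. F $ i $ m * Chr eps p m r j) - (\<Sum>m\<in>UNIV. F $ i $ m * Chr eps p m j r)"
    using eps_deriv_graph_axis[OF p q, of i j r] eps_deriv_graph_axis[OF p q, of i r j]
    unfolding F_def by linarith
  have "(\<Sum>b\<in>UNIV. \<Sum>a\<in>UNIV. F $ b $ r * F $ a $ j * Chr eps q i b a)
      = (\<Sum>a\<in>UNIV. (\<Sum>b\<in>UNIV. F $ b $ r * Chr eps q i b a) * F $ a $ j)"
    by (subst sum.swap) (simp add: sum_distrib_left sum_distrib_right mult_ac)
  moreover have "(\<Sum>b\<in>UNIV. \<Sum>a\<in>UNIV. F $ b $ r * F $ a $ j * Chr eps q i a b)
      = (\<Sum>a\<in>UNIV. (\<Sum>b\<in>UNIV. F $ b $ j * Chr eps q i b a) * F $ a $ r)"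
    by (simp add: sum_distrib_left sum_distrib_right mult_ac)
  ultimately show ?thesis
    using sym unfolding F_def torsion_def
    by (simp add: right_diff_distrib sum_subtractf)
qed

lemma pd_torsion:
  assumes x: "x \<in> U"
  shows "pd (\<lambda>y. torsion eps y i r j) s x = (\<Sum>m\<in>UNIV. Chr eps x i s m * torsion eps x m r j)
     - (\<Sum>b\<in>UNIV. Chr eps x b s r * torsion eps x i b j) - (\<Sum>a\<in>UNIV. Chr eps x a s j * torsion eps x i r a)"
proof -
  define dT where "dT b a w = (\<Sum>s\<in>UNIV. w $ s * pd (\<lambda>y. torsion eps y i b a) s x)" for b a w
  have "\<forall>q\<in>U. (\<Sum>b\<in>UNIV. \<Sum>a\<in>UNIV. eps (x,q) $ b $ r * eps (x,q) $ a $ j * torsion eps q i b a)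
      = (\<Sum>m\<in>UNIV. eps (x,q) $ i $ m * torsion eps x m r j)"
    using torsion_transport[OF x] by blast
  moreover have "((\<lambda>q. \<Sum>b\<in>UNIV. \<Sum>a\<in>UNIV. eps (x,q) $ b $ r * eps (x,q) $ a $ j * torsion eps q i b a)
      has_derivative (\<lambda>w. \<Sum>b\<in>UNIV. \<Sum>a\<in>UNIV. eps (x,x) $ b $ r * eps (x,x) $ a $ j * dT b a w
        + (eps (x,x) $ b $ r * eps_deriv a j (x,x) (0,w) + eps_deriv b r (x,x) (0,w) * eps (x,x) $ a $ j)
          * torsion eps x i b a)) (at x)"
    unfolding dT_def using x
    by (intro has_derivative_sum has_derivative_mult has_derivative_eps_second has_derivative_torsion)
  moreover have "((\<lambda>q. \<Sum>m\<in>UNIV. eps (x,q) $ i $ m * torsion eps x m r j) has_derivative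
      (\<lambda>w. \<Sum>m\<in>UNIV. eps_deriv i m (x,x) (0,w) * torsion eps x m r j)) (at x)"
    using x by (intro has_derivative_sum has_derivative_mult_left has_derivative_eps_second)
  ultimately have "(\<lambda>w. \<Sum>b\<in>UNIV. \<Sum>a\<in>UNIV. eps (x,x) $ b $ r * eps (x,x) $ a $ j * dT b a w
        + (eps (x,x) $ b $ r * eps_deriv a j (x,x) (0,w) + eps_deriv b r (x,x) (0,w) * eps (x,x) $ a $ j)
          * torsion eps x i b a)
      = (\<lambda>w. \<Sum>m\<in>UNIV. eps_deriv i m (x,x) (0,w) * torsion eps x m r j)"
    by (rule has_derivative_unique_on_open[OF open_U x])
  from fun_cong[OF this, of "axis s 1"] show ?thesis
    by (simp add: dT_def eps_diag[OF x] eps_deriv_second_diag[OF x] mat_def sum.distrib distrib_right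
        if_distrib[of "\<lambda>x. x * _"] if_distrib[of "\<lambda>x. _ * x"] sum_if_const_cond cong: if_cong)
qed

lemma hat_d_torsion_eq_0:
  assumes x: "x \<in> U"
  shows "hat_d eps (torsion eps) x i r k j = 0"
  using pd_torsion[OF x, of i k j r] pd_torsion[OF x, of i r j k] pd_torsion[OF x, of i k r j]
    pd_torsion_eq[OF x, of i k j r] pd_torsion_eq[OF x, of i r j k] pd_torsion_eq[OF x, of i k r j]
    Chr_flat[OF x, of i k j r] Chr_flat[OF x, of i j r k] Chr_flat[OF x, of i r k j]
  unfolding hat_d_def hat_d_comp_def torsion_def
  by (simp add: right_diff_distrib left_diff_distrib sum_subtractf mult.commute)

end

theorem proposition10:
  fixes U :: "(real^'n) set" and eps :: "(real^'n) \<times> (real^'n) \<Rightarrow> real^'n^'n"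
  assumes "CARD('n) \<ge> 2"
    and "open U"
    and "local_lie_group U eps"
  shows "\<forall>x\<in>U. \<forall>i r k j. hat_d eps (torsion eps) x i r k j = 0"
proof -
  interpret local_lie_chart U eps
    using assms(2,3) by unfold_locales (auto simp: local_lie_group_def)
  show ?thesis by (blast intro: hat_d_torsion_eq_0)
qed

end
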